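(* For every graph $G$ and every minor-3-core $C$ of $G$, there is a minor-3-core of $G$ isomorphic to $C$ in which every vertex has the disjoint-paths property.
   Context: Graphs are simple and undirected. Contracting a vertex $u$ to a neighbour $v$ produces the graph with vertex set $V\setminus\{u\}$ and edge set consisting of all edges of $G$ not incident to $u$ together with all edges $\{u',v\}$ with $u'\neq v$ and $\{u',u\}\in E$. A minor of $G$ is a graph obtained from $G$ by vertex contractions and subgraph operations; thus the vertices of a minor are (non-contracted) vertices of $G$. A minor-3-core of $G$ is a minor $H$ of $G$ with minimum degree at least $3$ such that no minor of $G$ with minimum degree at least $3$ has more edges than $H$. For a minor-3-core $C$ of $G$, a vertex $v$ of $C$ has the disjoint-paths property for $C$ if, letting $u_1,\dots,u_{\Delta_C(v)}$ be the neighbours of $v$ in $C$, there are paths $\gamma_i$ in $G$ from $v$ to $u_i$ such that any two distinct paths $\gamma_i,\gamma_j$ share only the vertex $v$. *)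

theory Defs
  imports Main
begin

type_synonym 'a graph = "'a set \<times> 'a set set"

definition verts :: "'a graph \<Rightarrow> 'a set" where "verts G = fst G"
definition edges :: "'a graph \<Rightarrow> 'a set set" where "edges G = snd G"

definition graph :: "'a graph \<Rightarrow> bool" where
  "graph G \<longleftrightarrow> finite (verts G) \<and>
     (\<forall>e\<in>edges G. \<exists>u v. e = {u, v} \<and> u \<noteq> v \<and> u \<in> verts G \<and> v \<in> verts G)"

definition adj :: "'a graph \<Rightarrow> 'a \<Rightarrow> 'a \<Rightarrow> bool" where
  "adj G u v \<longleftrightarrow> {u, v} \<in> edges G"

definition neighbours :: "'a graph \<Rightarrow> 'a \<Rightarrow> 'a set" where
  "neighbours G v = {u. adj G v u}"

definition degree :: "'a graph \<Rightarrow> 'a \<Rightarrow> nat" where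
  "degree G v = card (neighbours G v)"

definition min_degree_ge :: "'a graph \<Rightarrow> nat \<Rightarrow> bool" where
  "min_degree_ge G k \<longleftrightarrow> (\<forall>v\<in>verts G. degree G v \<ge> k)"

definition contract :: "'a graph \<Rightarrow> 'a \<Rightarrow> 'a \<Rightarrow> 'a graph" where
  "contract G u v = (verts G - {u},
     {e \<in> edges G. u \<notin> e} \<union> {{u', v} | u'. u' \<noteq> v \<and> {u', u} \<in> edges G})"

definition subgraph :: "'a graph \<Rightarrow> 'a graph \<Rightarrow> bool" where
  "subgraph H G \<longleftrightarrow> graph H \<and> verts H \<subseteq> verts G \<and> edges H \<subseteq> edges G"

inductive minor :: "'a graph \<Rightarrow> 'a graph \<Rightarrow> bool" where
  refl: "graph G \<Longrightarrow> minor G G"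
| sub: "minor H G \<Longrightarrow> subgraph H' H \<Longrightarrow> minor H' G"
| contr: "minor H G \<Longrightarrow> adj H u v \<Longrightarrow> minor (contract H u v) G"

definition minor_3_core :: "'a graph \<Rightarrow> 'a graph \<Rightarrow> bool" where
  "minor_3_core G H \<longleftrightarrow> minor H G \<and> min_degree_ge H 3 \<and>
     (\<forall>H'. minor H' G \<and> min_degree_ge H' 3 \<longrightarrow> card (edges H') \<le> card (edges H))"

definition isomorphic :: "'a graph \<Rightarrow> 'b graph \<Rightarrow> bool" where
  "isomorphic G H \<longleftrightarrow> (\<exists>f. bij_betw f (verts G) (verts H) \<and>
     (\<forall>u\<in>verts G. \<forall>v\<in>verts G. adj G u v \<longleftrightarrow> adj H (f u) (f v)))"

definition is_path :: "'a graph \<Rightarrow> 'a list \<Rightarrow> bool" where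
  "is_path G p \<longleftrightarrow> p \<noteq> [] \<and> distinct p \<and> set p \<subseteq> verts G \<and>
     (\<forall>i. Suc i < length p \<longrightarrow> adj G (p ! i) (p ! Suc i))"

definition disjoint_paths_property :: "'a graph \<Rightarrow> 'a graph \<Rightarrow> 'a \<Rightarrow> bool" where
  "disjoint_paths_property G C v \<longleftrightarrow>
     (\<exists>\<gamma> :: 'a \<Rightarrow> 'a list.
        (\<forall>u\<in>neighbours C v. is_path G (\<gamma> u) \<and> hd (\<gamma> u) = v \<and> last (\<gamma> u) = u) \<and>
        (\<forall>u\<in>neighbours C v. \<forall>u'\<in>neighbours C v. u \<noteq> u' \<longrightarrow>
            set (\<gamma> u) \<inter> set (\<gamma> u') = {v}))"

end

theory Submission
  imports Defs
begin

text \<open>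
  Take a spanning subgraph \<open>G\<^sub>0\<close> of \<open>G\<close> that is edge-minimal with \<open>C\<close> as a minor, and a model
  of \<open>C\<close> in it. By minimality every edge inside a branch set is a bridge, so each branch set
  \<open>B x\<close> induces a tree; label its vertices by the neighbours \<open>y\<close> of \<open>x\<close> whose branch set they
  are adjacent to. If some tree edge separates the labels into two groups of size at least two,
  splitting \<open>x\<close> along that edge gives a minor of minimum degree 3 with one more edge than \<open>C\<close>,
  contradicting maximality. Otherwise the tree has a centre: a vertex from which pairwise
  disjoint tree paths reach all labels. Renaming every vertex of \<open>C\<close> to the centre of its branch
  set yields an isomorphic minor-3-core, and the fan at each centre, continued inside the
  neighbouring branch sets up to their centres, gives the disjoint paths.
\<close>

lemma verts_pair [simp]: "verts (V, E) = V"
  by (simp add: verts_def)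

lemma edges_pair [simp]: "edges (V, E) = E"
  by (simp add: edges_def)

lemma adj_sym: "adj G u v \<Longrightarrow> adj G v u"
  by (simp add: adj_def insert_commute)

lemma graph_adjD: "graph G \<Longrightarrow> adj G u v \<Longrightarrow> u \<noteq> v \<and> u \<in> verts G \<and> v \<in> verts G"
  unfolding graph_def adj_def by (metis doubleton_eq_iff)

lemma graph_edgeD:
  "graph G \<Longrightarrow> e \<in> edges G \<Longrightarrow> \<exists>u v. e = {u, v} \<and> u \<noteq> v \<and> u \<in> verts G \<and> v \<in> verts G"
  unfolding graph_def by blast

lemma graph_edge_subset_verts: "graph G \<Longrightarrow> e \<in> edges G \<Longrightarrow> e \<subseteq> verts G"
  using graph_edgeD by fastforce

lemma graph_finite_edges: "graph G \<Longrightarrow> finite (edges G)"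
  using graph_edge_subset_verts by (metis Pow_iff finite_Pow_iff finite_subset graph_def subsetI)

lemma graph_spanning_subgraph: "graph G \<Longrightarrow> E \<subseteq> edges G \<Longrightarrow> graph (verts G, E)"
  unfolding graph_def by auto

lemma neighbours_subset_verts: "graph G \<Longrightarrow> neighbours G v \<subseteq> verts G"
  unfolding neighbours_def using graph_adjD by fastforce

lemma self_notin_neighbours: "graph G \<Longrightarrow> v \<notin> neighbours G v"
  unfolding neighbours_def using graph_adjD by fastforce

lemma graph_finite_neighbours: "graph G \<Longrightarrow> finite (neighbours G v)"
  using neighbours_subset_verts finite_subset graph_def by metis

lemma min_degree_geD: "min_degree_ge G k \<Longrightarrow> v \<in> verts G \<Longrightarrow> k \<le> card (neighbours G v)"
  unfolding min_degree_ge_def degree_def by blast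

section \<open>Reachability inside a vertex set\<close>

definition adj_on :: "'a graph \<Rightarrow> 'a set \<Rightarrow> 'a \<Rightarrow> 'a \<Rightarrow> bool" where
  "adj_on G A u v \<longleftrightarrow> u \<in> A \<and> v \<in> A \<and> adj G u v"

definition reach :: "'a graph \<Rightarrow> 'a set \<Rightarrow> 'a \<Rightarrow> 'a \<Rightarrow> bool" where
  "reach G A a b \<longleftrightarrow> a \<in> A \<and> (adj_on G A)\<^sup>*\<^sup>* a b"

definition connected_on :: "'a graph \<Rightarrow> 'a set \<Rightarrow> bool" where
  "connected_on G A \<longleftrightarrow> (\<forall>a\<in>A. \<forall>b\<in>A. reach G A a b)"

lemma reach_refl: "a \<in> A \<Longrightarrow> reach G A a a"
  by (simp add: reach_def)

lemma reachD: "reach G A a b \<Longrightarrow> a \<in> A \<and> b \<in> A"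
  unfolding reach_def by (metis adj_on_def rtranclp.cases)

lemma reach_step: "reach G A a b \<Longrightarrow> c \<in> A \<Longrightarrow> adj G b c \<Longrightarrow> reach G A a c"
  unfolding reach_def using reachD[unfolded reach_def]
  by (metis adj_on_def rtranclp.rtrancl_into_rtrancl)

lemma reach_edge: "a \<in> A \<Longrightarrow> b \<in> A \<Longrightarrow> adj G a b \<Longrightarrow> reach G A a b"
  using reach_refl reach_step by metis

lemma reach_trans: "reach G A a b \<Longrightarrow> reach G A b c \<Longrightarrow> reach G A a c"
  unfolding reach_def by auto

lemma reach_sym: "reach G A a b \<Longrightarrow> reach G A b a"
proof -
  assume r: "reach G A a b"
  have "(adj_on G A)\<^sup>*\<^sup>* a b" using r by (simp add: reach_def)
  then have "(adj_on G A)\<^sup>*\<^sup>* b a"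
    by (induction rule: rtranclp_induct)
      (auto intro: converse_rtranclp_into_rtranclp simp: adj_on_def adj_sym)
  then show ?thesis using reachD[OF r] by (simp add: reach_def)
qed

lemma reach_lift:
  assumes "reach G A a b"
    and "\<And>u v. u \<in> A \<Longrightarrow> v \<in> A \<Longrightarrow> adj G u v \<Longrightarrow> reach G' A' u v"
    and "a \<in> A'"
  shows "reach G' A' a b"
proof -
  have "(adj_on G A)\<^sup>*\<^sup>* a b" using assms(1) by (simp add: reach_def)
  then show ?thesis
  proof (induction rule: rtranclp_induct)
    case base
    then show ?case using assms(3) by (simp add: reach_refl)
  next
    case (step y z)
    then show ?case using assms(2) reach_trans unfolding adj_on_def by metis
  qed
qed

lemma reach_mono: "reach G A a b \<Longrightarrow> A \<subseteq> A' \<Longrightarrow> reach G A' a b"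
  by (rule reach_lift) (auto intro: reach_edge dest: reachD)

lemma reach_mono_adj:
  "reach G A a b \<Longrightarrow> (\<And>u v. u \<in> A \<Longrightarrow> v \<in> A \<Longrightarrow> adj G u v \<Longrightarrow> adj G' u v) \<Longrightarrow> reach G' A a b"
  by (rule reach_lift) (auto intro: reach_edge dest: reachD)

lemma reach_component: "reach G A a b \<Longrightarrow> reach G {z. reach G A a z} a b"
proof -
  assume r: "reach G A a b"
  have "(adj_on G A)\<^sup>*\<^sup>* a b" using r by (simp add: reach_def)
  then show ?thesis
  proof (induction rule: rtranclp_induct)
    case base
    then show ?case using reachD[OF r] by (simp add: reach_refl)
  next
    case (step y z)
    have "reach G A a y" using step(1) reachD[OF r] by (simp add: reach_def)
    then have "reach G A a z" using step(2) reach_step unfolding adj_on_def by metis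
    then show ?case using step reach_step unfolding adj_on_def by (metis mem_Collect_eq)
  qed
qed

lemma reach_first_step:
  assumes "reach G A a b" "a \<noteq> b"
  shows "\<exists>c\<in>A. adj G a c"
proof -
  have "(adj_on G A)\<^sup>*\<^sup>* a b" using assms(1) by (simp add: reach_def)
  then show ?thesis using assms(2)
    by (cases rule: converse_rtranclpE) (auto simp: adj_on_def)
qed

lemma connected_onD: "connected_on G A \<Longrightarrow> a \<in> A \<Longrightarrow> b \<in> A \<Longrightarrow> reach G A a b"
  unfolding connected_on_def by blast

lemma connected_on_from:
  assumes "c \<in> A" "\<And>z. z \<in> A \<Longrightarrow> reach G A c z"
  shows "connected_on G A"
  unfolding connected_on_def
proof (intro ballI)
  fix a b assume "a \<in> A" "b \<in> A"
  then have "reach G A c a" "reach G A c b" by (simp_all add: assms(2))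
  then show "reach G A a b" using reach_sym reach_trans by metis
qed

lemma connected_on_singleton: "connected_on G {x}"
  by (simp add: connected_on_def reach_refl)

lemma connected_on_Un:
  assumes "connected_on G A" "connected_on G B" "a \<in> A" "b \<in> B" "adj G a b"
  shows "connected_on G (A \<union> B)"
proof (rule connected_on_from)
  show "a \<in> A \<union> B" using assms(3) by simp
  fix z assume "z \<in> A \<union> B"
  then show "reach G (A \<union> B) a z"
  proof
    assume "z \<in> A"
    then have "reach G A a z" by (rule connected_onD[OF assms(1) assms(3)])
    then show ?thesis by (rule reach_mono) simp
  next
    assume "z \<in> B"
    then have "reach G B b z" by (rule connected_onD[OF assms(2) assms(4)])
    then have "reach G (A \<union> B) b z" by (rule reach_mono) simp
    moreover have "reach G (A \<union> B) a b" using assms(3-5) by (intro reach_edge) auto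
    ultimately show ?thesis using reach_trans by metis
  qed
qed

section \<open>Paths\<close>

lemma is_path_singleton [simp]: "is_path G [x] \<longleftrightarrow> x \<in> verts G"
  unfolding is_path_def by auto

lemma is_path_nonempty: "is_path G p \<Longrightarrow> p \<noteq> []"
  by (simp add: is_path_def)

lemma is_path_Cons_Cons:
  "is_path G (x # y # xs) \<longleftrightarrow> x \<in> verts G \<and> adj G x y \<and> x \<notin> set (y # xs) \<and> is_path G (y # xs)"
proof
  assume p: "is_path G (x # y # xs)"
  have "adj G ((y # xs) ! i) ((y # xs) ! Suc i)" if "Suc i < length (y # xs)" for i
    using p that unfolding is_path_def by fastforce
  moreover have "adj G x y" using p unfolding is_path_def by fastforce
  ultimately show "x \<in> verts G \<and> adj G x y \<and> x \<notin> set (y # xs) \<and> is_path G (y # xs)"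
    using p unfolding is_path_def by auto
next
  assume h: "x \<in> verts G \<and> adj G x y \<and> x \<notin> set (y # xs) \<and> is_path G (y # xs)"
  have "adj G ((x # y # xs) ! i) ((x # y # xs) ! Suc i)" if "Suc i < length (x # y # xs)" for i
    using h that unfolding is_path_def by (cases i) auto
  then show "is_path G (x # y # xs)" using h unfolding is_path_def by auto
qed

lemma is_path_ConsD:
  "is_path G (x # q) \<Longrightarrow> q \<noteq> [] \<Longrightarrow> is_path G q \<and> adj G x (hd q) \<and> x \<notin> set q"
  by (cases q) (simp_all only: is_path_Cons_Cons list.sel(1) simp_thms)

lemma is_path_ConsI:
  "is_path G q \<Longrightarrow> x \<in> verts G \<Longrightarrow> adj G x (hd q) \<Longrightarrow> x \<notin> set q \<Longrightarrow> is_path G (x # q)"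
proof (cases q)
  case Nil
  then show "is_path G q \<Longrightarrow> ?thesis" by (simp add: is_path_def)
qed (simp add: is_path_Cons_Cons)

lemma is_path_append:
  "is_path G p \<Longrightarrow> is_path G q \<Longrightarrow> adj G (last p) (hd q) \<Longrightarrow> set p \<inter> set q = {} \<Longrightarrow>
    is_path G (p @ q)"
proof (induction p)
  case Nil
  then show ?case by (simp add: is_path_def)
next
  case (Cons x p)
  show ?case
  proof (cases p)
    case Nil
    then show ?thesis using Cons.prems by (auto intro: is_path_ConsI)
  next
    case (Cons y p')
    then have "is_path G p" "adj G x y" "x \<notin> set p" "x \<in> verts G"
      using Cons.prems(1) by (auto simp: is_path_Cons_Cons)
    moreover have "is_path G (p @ q)" using Cons.IH Cons.prems \<open>is_path G p\<close> \<open>p = y # p'\<close> by auto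
    ultimately show ?thesis using Cons.prems \<open>p = y # p'\<close> by (auto simp: is_path_Cons_Cons)
  qed
qed

lemma is_path_suffix: "is_path G (p @ q) \<Longrightarrow> q \<noteq> [] \<Longrightarrow> is_path G q"
  by (induction p) (auto dest: is_path_ConsD)

lemma is_path_mono:
  "is_path G p \<Longrightarrow> verts G \<subseteq> verts G' \<Longrightarrow> edges G \<subseteq> edges G' \<Longrightarrow> is_path G' p"
  unfolding is_path_def adj_def by blast

lemma reach_imp_path:
  assumes "reach G A a b" "A \<subseteq> verts G"
  shows "\<exists>p. is_path G p \<and> hd p = a \<and> last p = b \<and> set p \<subseteq> A"
proof -
  have "(adj_on G A)\<^sup>*\<^sup>* a b" using assms(1) by (simp add: reach_def)
  moreover have "b \<in> A" using reachD[OF assms(1)] by simp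
  ultimately show ?thesis
  proof (induction rule: converse_rtranclp_induct)
    case base
    then show ?case using assms(2) by (intro exI[of _ "[b]"]) auto
  next
    case (step a a')
    then obtain p where p: "is_path G p" "hd p = a'" "last p = b" "set p \<subseteq> A" by auto
    have a: "a \<in> A" "adj G a a'" using step(1) by (auto simp: adj_on_def)
    show ?case
    proof (cases "a \<in> set p")
      case True
      then obtain p1 p2 where "p = p1 @ a # p2" by (metis split_list)
      then show ?thesis using p is_path_suffix[of G p1 "a # p2"] by (intro exI[of _ "a # p2"]) auto
    next
      case False
      then show ?thesis using p a assms(2) is_path_nonempty[OF p(1)]
        by (intro exI[of _ "a # p"]) (auto intro: is_path_ConsI)
    qed
  qed
qed

lemma path_imp_reach: "is_path G p \<Longrightarrow> set p \<subseteq> A \<Longrightarrow> z \<in> set p \<Longrightarrow> reach G A (hd p) z"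
proof (induction p arbitrary: z)
  case Nil
  then show ?case by simp
next
  case (Cons x p)
  show ?case
  proof (cases "p = [] \<or> z = x")
    case True
    then show ?thesis using Cons.prems by (auto intro: reach_refl)
  next
    case False
    then have p: "is_path G p" "adj G x (hd p)" "z \<in> set p"
      using is_path_ConsD[OF Cons.prems(1)] Cons.prems(3) by auto
    then have "reach G A (hd p) z" using Cons.IH Cons.prems(2) by simp
    moreover have "reach G A x (hd p)" using Cons.prems(2) p(2) False by (intro reach_edge) auto
    ultimately show ?thesis using reach_trans by fastforce
  qed
qed

section \<open>Contractions and minor models\<close>

lemma verts_contract [simp]: "verts (contract G u v) = verts G - {u}"
  by (simp add: contract_def)

lemma edges_contract [simp]:
  "edges (contract G u v) = {e \<in> edges G. u \<notin> e} \<union> {{u', v} |u'. u' \<noteq> v \<and> {u', u} \<in> edges G}"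
  by (simp add: contract_def)

lemma adj_contract_keep: "adj G p q \<Longrightarrow> p \<noteq> u \<Longrightarrow> q \<noteq> u \<Longrightarrow> adj (contract G u x) p q"
  unfolding adj_def by simp

lemma adj_contract_new: "adj G p u \<Longrightarrow> p \<noteq> x \<Longrightarrow> adj (contract G u x) x p"
  unfolding adj_def by (auto simp: insert_commute)

lemma graph_contract:
  assumes g: "graph G" and a: "adj G u v"
  shows "graph (contract G u v)"
  unfolding graph_def
proof (intro conjI ballI)
  show "finite (verts (contract G u v))" using g by (simp add: graph_def)
  fix e assume e: "e \<in> edges (contract G u v)"
  show "\<exists>p q. e = {p, q} \<and> p \<noteq> q \<and> p \<in> verts (contract G u v) \<and> q \<in> verts (contract G u v)"
  proof (cases "e \<in> edges G \<and> u \<notin> e")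
    case True
    then show ?thesis using graph_edgeD[OF g] by fastforce
  next
    case False
    then obtain u' where "e = {u', v}" "u' \<noteq> v" "adj G u' u" using e by (auto simp: adj_def)
    then show ?thesis using graph_adjD[OF g] a by fastforce
  qed
qed

lemma minor_graphD: "minor H G \<Longrightarrow> graph H \<and> graph G"
  by (induction rule: minor.induct) (auto simp: subgraph_def graph_contract)

lemma minor_trans: "minor H K \<Longrightarrow> minor K G \<Longrightarrow> minor H G"
  by (induction H K rule: minor.induct) (auto intro: minor.intros)

lemma subgraph_imp_minor: "graph G \<Longrightarrow> subgraph H G \<Longrightarrow> minor H G"
  by (rule minor.sub[OF minor.refl])

text \<open>\<open>B x\<close> is the branch set of \<open>x\<close>; since the vertices of a minor are vertices of the host,
  \<open>x\<close> itself belongs to it.\<close>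

definition minor_model :: "'a graph \<Rightarrow> 'a graph \<Rightarrow> ('a \<Rightarrow> 'a set) \<Rightarrow> bool" where
  "minor_model G H B \<longleftrightarrow>
     (\<forall>x\<in>verts H. x \<in> B x \<and> B x \<subseteq> verts G \<and> connected_on G (B x)) \<and>
     (\<forall>x\<in>verts H. \<forall>y\<in>verts H. x \<noteq> y \<longrightarrow> B x \<inter> B y = {}) \<and>
     (\<forall>x y. {x, y} \<in> edges H \<longrightarrow> (\<exists>a\<in>B x. \<exists>b\<in>B y. adj G a b))"

lemma minor_modelD:
  assumes "minor_model G H B"
  shows "\<And>x. x \<in> verts H \<Longrightarrow> x \<in> B x"
    and "\<And>x. x \<in> verts H \<Longrightarrow> B x \<subseteq> verts G"
    and "\<And>x. x \<in> verts H \<Longrightarrow> connected_on G (B x)"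
    and "\<And>x y. x \<in> verts H \<Longrightarrow> y \<in> verts H \<Longrightarrow> x \<noteq> y \<Longrightarrow> B x \<inter> B y = {}"
    and "\<And>x y. {x, y} \<in> edges H \<Longrightarrow> \<exists>a\<in>B x. \<exists>b\<in>B y. adj G a b"
  using assms unfolding minor_model_def by blast+

lemma minor_modelI:
  assumes "\<And>x. x \<in> verts H \<Longrightarrow> x \<in> B x"
    and "\<And>x. x \<in> verts H \<Longrightarrow> B x \<subseteq> verts G"
    and "\<And>x. x \<in> verts H \<Longrightarrow> connected_on G (B x)"
    and "\<And>x y. x \<in> verts H \<Longrightarrow> y \<in> verts H \<Longrightarrow> x \<noteq> y \<Longrightarrow> B x \<inter> B y = {}"
    and "\<And>x y. {x, y} \<in> edges H \<Longrightarrow> \<exists>a\<in>B x. \<exists>b\<in>B y. adj G a b"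
  shows "minor_model G H B"
  using assms unfolding minor_model_def by blast

lemma minor_model_branch_unique:
  assumes "minor_model G H B" "x \<in> verts H" "y \<in> verts H" "a \<in> B x" "a \<in> B y"
  shows "x = y"
  using minor_modelD(4)[OF assms(1-3)] assms(4,5) by blast

lemma minor_model_subgraph:
  assumes B: "minor_model G H B" and "subgraph H' H"
  shows "minor_model G H' B"
proof -
  have H': "verts H' \<subseteq> verts H" "edges H' \<subseteq> edges H" using assms(2) by (auto simp: subgraph_def)
  show ?thesis
  proof (rule minor_modelI)
    show "\<And>x y. {x, y} \<in> edges H' \<Longrightarrow> \<exists>a\<in>B x. \<exists>b\<in>B y. adj G a b"
      using H'(2) minor_modelD(5)[OF B] by blast
    show "\<And>x y. x \<in> verts H' \<Longrightarrow> y \<in> verts H' \<Longrightarrow> x \<noteq> y \<Longrightarrow> B x \<inter> B y = {}"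
      using H'(1) minor_modelD(4)[OF B] by blast
  qed (use H'(1) minor_modelD(1-3)[OF B] in auto)
qed

lemma minor_model_contract:
  assumes B: "minor_model G H B" and gH: "graph H" and uv: "adj H u v"
  shows "minor_model G (contract H u v) (B(v := B v \<union> B u))"
proof -
  have H: "u \<noteq> v" "u \<in> verts H" "v \<in> verts H" using graph_adjD[OF gH uv] by auto
  define B' where "B' = B(v := B v \<union> B u)"
  have sup: "B w \<subseteq> B' w" for w unfolding B'_def by auto
  note disj = minor_modelD(4)[OF B]
  have "minor_model G (contract H u v) B'"
  proof (rule minor_modelI)
    fix x assume "x \<in> verts (contract H u v)"
    then have x: "x \<in> verts H" "x \<noteq> u" by auto
    show "x \<in> B' x" using sup minor_modelD(1)[OF B x(1)] by auto
    show "B' x \<subseteq> verts G" using minor_modelD(2)[OF B] x H unfolding B'_def by auto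
    obtain a b where "a \<in> B v" "b \<in> B u" "adj G a b"
      using minor_modelD(5)[OF B, of v u] uv by (auto simp: adj_def insert_commute)
    then have "connected_on G (B v \<union> B u)"
      using minor_modelD(3)[OF B] H by (intro connected_on_Un) auto
    then show "connected_on G (B' x)" using minor_modelD(3)[OF B x(1)] unfolding B'_def by auto
  next
    fix x y assume "x \<in> verts (contract H u v)" "y \<in> verts (contract H u v)" "x \<noteq> y"
    then show "B' x \<inter> B' y = {}"
      using disj[of x y] disj[of u y] disj[of u x] H unfolding B'_def by auto
  next
    fix x y assume e: "{x, y} \<in> edges (contract H u v)"
    show "\<exists>a\<in>B' x. \<exists>b\<in>B' y. adj G a b"
    proof (cases "{x, y} \<in> edges H")
      case True
      then show ?thesis using minor_modelD(5)[OF B] sup by blast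
    next
      case False
      then obtain w where w: "{x, y} = {w, v}" "{w, u} \<in> edges H" using e by auto
      obtain a b where ab: "a \<in> B' w" "b \<in> B' v" "adj G a b"
        using minor_modelD(5)[OF B w(2)] sup unfolding B'_def by fastforce
      then show ?thesis using w(1) adj_sym[OF ab(3)] by (auto simp: doubleton_eq_iff)
    qed
  qed
  then show ?thesis unfolding B'_def .
qed

lemma minor_imp_minor_model: "minor H G \<Longrightarrow> \<exists>B. minor_model G H B"
proof (induction rule: minor.induct)
  case (refl G)
  have "minor_model G G (\<lambda>x. {x})"
    by (rule minor_modelI) (auto simp: adj_def connected_on_singleton)
  then show ?case by blast
next
  case (sub H G H')
  then obtain B where "minor_model G H B" by blast
  then show ?case using minor_model_subgraph[OF _ sub.hyps(2)] by blast
next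
  case (contr H G u v)
  then obtain B where "minor_model G H B" by blast
  then show ?case
    using minor_model_contract[OF _ _ contr.hyps(2)] minor_graphD[OF contr.hyps(1)] by blast
qed

lemma connected_on_contract_into:
  assumes c: "connected_on G S" and x: "x \<in> S" and u: "u \<in> S" "u \<noteq> x"
  shows "connected_on (contract G u x) (S - {u})"
proof (rule connected_on_from)
  let ?G' = "contract G u x"
  show "x \<in> S - {u}" using x u by simp
  have "z \<noteq> u \<longrightarrow> reach ?G' (S - {u}) x z" if "(adj_on G S)\<^sup>*\<^sup>* x z" for z
    using that
  proof (induction rule: rtranclp_induct)
    case base
    then show ?case using x u by (simp add: reach_refl)
  next
    case (step y z)
    then have yz: "y \<in> S" "z \<in> S" "adj G y z" by (auto simp: adj_on_def)
    show ?case
    proof (cases "y = u")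
      case True
      show ?thesis
      proof (cases "z = x")
        case False
        then have "adj ?G' x z" using adj_contract_new[OF adj_sym[OF yz(3)[unfolded True]]] by simp
        then show ?thesis using yz x u by (intro impI reach_edge) auto
      qed (use x u in \<open>simp add: reach_refl\<close>)
    next
      case False
      then show ?thesis using step.IH yz adj_contract_keep reach_step by fastforce
    qed
  qed
  then show "reach ?G' (S - {u}) x z" if "z \<in> S - {u}" for z
    using that connected_onD[OF c x] by (auto simp: reach_def)
qed

lemma minor_model_contract_into_branch:
  assumes gG: "graph G" and gH: "graph H" and B: "minor_model G H B" and x: "x \<in> verts H"
    and u: "u \<in> B x" "adj G x u"
  shows "minor_model (contract G u x) H (B(x := B x - {u}))"
proof -
  define G' where "G' = contract G u x"
  define B' where "B' = B(x := B x - {u})"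
  have ux: "u \<noteq> x" using graph_adjD[OF gG u(2)] by auto
  have xB: "x \<in> B x" using minor_modelD(1)[OF B x] .
  note disj = minor_modelD(4)[OF B]
  have u_other: "u \<notin> B y" if "y \<in> verts H" "y \<noteq> x" for y
    using disj[of x y] that x u(1) by auto
  have "minor_model G' H B'"
  proof (rule minor_modelI)
    fix y assume y: "y \<in> verts H"
    show "y \<in> B' y" using minor_modelD(1)[OF B y] ux unfolding B'_def by auto
    show "B' y \<subseteq> verts G'"
      using minor_modelD(2)[OF B y] u_other[OF y] unfolding B'_def G'_def by auto
    show "connected_on G' (B' y)"
    proof (cases "y = x")
      case True
      then show ?thesis unfolding B'_def G'_def
        using connected_on_contract_into[OF minor_modelD(3)[OF B x] xB u(1) ux] by simp
    next
      case False
      have "reach G' (B y) a b" if "a \<in> B y" "b \<in> B y" for a b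
        using connected_onD[OF minor_modelD(3)[OF B y] that]
      proof (rule reach_mono_adj)
        fix p q assume "p \<in> B y" "q \<in> B y" "adj G p q"
        then show "adj G' p q" unfolding G'_def using adj_contract_keep u_other[OF y False] by metis
      qed
      then show ?thesis using False unfolding B'_def connected_on_def by simp
    qed
  next
    fix y z assume "y \<in> verts H" "z \<in> verts H" "y \<noteq> z"
    then show "B' y \<inter> B' z = {}" using disj[of y z] unfolding B'_def by auto
  next
    have edge: "\<exists>a'\<in>B' p. \<exists>b'\<in>B' q. adj G' a' b'"
      if e: "{p, q} \<in> edges H" and ab: "a \<in> B p" "b \<in> B q" "adj G a b" "b \<noteq> u" for p q a b
    proof (cases "a = u")
      case True
      have pq: "p \<in> verts H" "q \<in> verts H" "p \<noteq> q"
        using graph_adjD[OF gH, of p q] e by (auto simp: adj_def)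
      then have "p = x" using minor_model_branch_unique[OF B _ x] ab(1) u(1) True by blast
      then have "b \<notin> B x" "b \<noteq> x" using disj[of q x] pq ab(2) xB by auto
      then have "adj G' x b" "x \<in> B' p" "b \<in> B' q"
        using adj_contract_new[OF adj_sym[OF ab(3)[unfolded True]], of x] xB ux ab(2) \<open>p = x\<close> pq
        unfolding G'_def B'_def by auto
      then show ?thesis by blast
    next
      case False
      then have "adj G' a b" "a \<in> B' p" "b \<in> B' q"
        using adj_contract_keep[OF ab(3)] ab unfolding G'_def B'_def by auto
      then show ?thesis by blast
    qed
    fix p q assume e: "{p, q} \<in> edges H"
    obtain a b where ab: "a \<in> B p" "b \<in> B q" "adj G a b" using minor_modelD(5)[OF B e] by auto
    show "\<exists>a\<in>B' p. \<exists>b\<in>B' q. adj G' a b"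
    proof (cases "b = u")
      case True
      then have "a \<noteq> u" using graph_adjD[OF gG ab(3)] by auto
      then show ?thesis using edge[of q p b a] e ab adj_sym by (metis insert_commute)
    qed (use edge e ab in blast)
  qed
  then show ?thesis unfolding G'_def B'_def .
qed

lemma minor_model_singletons_imp_subgraph:
  assumes gH: "graph H" and B: "minor_model G H B" and singletons: "\<forall>x\<in>verts H. B x = {x}"
  shows "subgraph H G"
  unfolding subgraph_def
proof (intro conjI subsetI)
  show "graph H" by fact
  show "x \<in> verts G" if "x \<in> verts H" for x using minor_modelD(1,2)[OF B that] by blast
  fix e assume e: "e \<in> edges H"
  then obtain p q where pq: "e = {p, q}" "p \<in> verts H" "q \<in> verts H" using graph_edgeD[OF gH] by blast
  then obtain a b where "a \<in> B p" "b \<in> B q" "adj G a b" using minor_modelD(5)[OF B] e by blast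
  then show "e \<in> edges G" using singletons pq unfolding adj_def by auto
qed

lemma minor_model_imp_minor:
  assumes "graph G" "graph H" "minor_model G H B"
  shows "minor H G"
  using assms
proof (induction "\<Sum>x\<in>verts H. card (B x)" arbitrary: G B rule: less_induct)
  case less
  note gG = less.prems(1) and gH = less.prems(2) and B = less.prems(3)
  show ?case
  proof (cases "\<forall>x\<in>verts H. B x = {x}")
    case True
    then show ?thesis using gG minor_model_singletons_imp_subgraph[OF gH B] subgraph_imp_minor by blast
  next
    case False
    then obtain x where x: "x \<in> verts H" "B x \<noteq> {x}" by blast
    have xB: "x \<in> B x" using minor_modelD(1)[OF B x(1)] .
    then obtain u0 where "u0 \<in> B x" "u0 \<noteq> x" using x(2) by blast
    then have "reach G (B x) x u0" using connected_onD[OF minor_modelD(3)[OF B x(1)] xB] by blast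
    then obtain u where u: "u \<in> B x" "adj G x u" using reach_first_step \<open>u0 \<noteq> x\<close> by metis
    define G' where "G' = contract G u x"
    define B' where "B' = B(x := B x - {u})"
    have gG': "graph G'" unfolding G'_def using graph_contract[OF gG adj_sym[OF u(2)]] .
    have B': "minor_model G' H B'"
      unfolding G'_def B'_def by (rule minor_model_contract_into_branch[OF gG gH B x(1) u])
    have finBx: "finite (B x)"
      using minor_modelD(2)[OF B x(1)] gG finite_subset unfolding graph_def by blast
    have "(\<Sum>y\<in>verts H. card (B' y)) < (\<Sum>y\<in>verts H. card (B y))"
    proof (rule sum_strict_mono_ex1)
      show "finite (verts H)" using gH by (simp add: graph_def)
      show "\<forall>y\<in>verts H. card (B' y) \<le> card (B y)"
        unfolding B'_def using finBx by (auto intro: card_mono)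
      show "\<exists>y\<in>verts H. card (B' y) < card (B y)"
        unfolding B'_def using x(1) card_Diff1_less[OF finBx u(1)] by auto
    qed
    then have "minor H G'" using less.hyps gG' gH B' by blast
    moreover have "minor G' G" unfolding G'_def by (rule minor.contr[OF minor.refl[OF gG] adj_sym[OF u(2)]])
    ultimately show ?thesis by (rule minor_trans)
  qed
qed

section \<open>Edge-minimal hosts\<close>

lemma exists_edge_minimal_host:
  assumes gG: "graph G" and "minor C G"
  obtains G0 where "subgraph G0 G" "minor C G0" "\<And>E. E \<subset> edges G0 \<Longrightarrow> \<not> minor C (verts G0, E)"
proof -
  define P where "P E \<longleftrightarrow> E \<subseteq> edges G \<and> minor C (verts G, E)" for E
  have "(verts G, edges G) = G" by (simp add: verts_def edges_def)
  then have "P (edges G)" using assms(2) unfolding P_def by simp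
  then obtain E0 where E0: "P E0" and least: "\<And>E. P E \<Longrightarrow> card E0 \<le> card E"
    using ex_has_least_nat[of P "edges G" card] by blast
  have "finite E0" using E0 graph_finite_edges[OF gG] finite_subset unfolding P_def by blast
  show thesis
  proof (rule that)
    show "subgraph (verts G, E0) G"
      using graph_spanning_subgraph[OF gG] E0 unfolding P_def subgraph_def by simp
    show "minor C (verts G, E0)" using E0 unfolding P_def by simp
    show "\<not> minor C (verts (verts G, E0), E)" if "E \<subset> edges (verts G, E0)" for E
      using that E0 least[of E] psubset_card_mono[OF \<open>finite E0\<close>, of E] unfolding P_def by force
  qed
qed

lemma adj_del_edge [simp]: "adj (verts G, edges G - {e}) p q \<longleftrightarrow> adj G p q \<and> {p, q} \<noteq> e"
  by (simp add: adj_def)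

lemma minor_model_del_edge:
  assumes gC: "graph C" and B: "minor_model G C B" and x: "x \<in> verts C" and ab: "a \<in> B x" "b \<in> B x"
    and r: "reach (verts G, edges G - {{a, b}}) (B x) a b"
  shows "minor_model (verts G, edges G - {{a, b}}) C B"
proof -
  have in_x: "y = x" if "y \<in> verts C" "a \<in> B y \<or> b \<in> B y" for y
    using that minor_model_branch_unique[OF B _ x] ab by blast
  show ?thesis
  proof (rule minor_modelI)
    let ?G' = "(verts G, edges G - {{a, b}})"
    fix y assume y: "y \<in> verts C"
    show "y \<in> B y" "B y \<subseteq> verts ?G'" using minor_modelD(1,2)[OF B y] by auto
    have "reach ?G' (B y) p q" if "p \<in> B y" "q \<in> B y" for p q
      using connected_onD[OF minor_modelD(3)[OF B y] that]
    proof (rule reach_lift)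
      fix u v assume uv: "u \<in> B y" "v \<in> B y" "adj G u v"
      show "reach ?G' (B y) u v"
      proof (cases "{u, v} = {a, b}")
        case True
        then have "y = x" using in_x[OF y] uv by (auto simp: doubleton_eq_iff)
        then show ?thesis using True r reach_sym[OF r] by (auto simp: doubleton_eq_iff)
      next
        case False
        then have "adj ?G' u v" using uv(3) by simp
        then show ?thesis by (rule reach_edge[OF uv(1,2)])
      qed
    qed (use that in simp)
    then show "connected_on ?G' (B y)" unfolding connected_on_def by blast
  next
    fix y z assume "y \<in> verts C" "z \<in> verts C" "y \<noteq> z"
    then show "B y \<inter> B z = {}" by (rule minor_modelD(4)[OF B])
  next
    fix p q assume e: "{p, q} \<in> edges C"
    then obtain a' b' where ab': "a' \<in> B p" "b' \<in> B q" "adj G a' b'"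
      using minor_modelD(5)[OF B] by blast
    have "p \<in> verts C" "q \<in> verts C" "p \<noteq> q" using graph_adjD[OF gC, of p q] e by (auto simp: adj_def)
    then have "{a', b'} \<noteq> {a, b}" using in_x ab' by (auto simp: doubleton_eq_iff)
    then show "\<exists>a'\<in>B p. \<exists>b'\<in>B q. adj (verts G, edges G - {{a, b}}) a' b'" using ab' by auto
  qed
qed

lemma minimal_host_branch_edge_is_bridge:
  assumes gG: "graph G" and gC: "graph C" and B: "minor_model G C B" and x: "x \<in> verts C"
    and ab: "a \<in> B x" "b \<in> B x" "adj G a b"
    and minimal: "\<And>E. E \<subset> edges G \<Longrightarrow> \<not> minor C (verts G, E)"
  shows "\<not> reach (verts G, edges G - {{a, b}}) (B x) a b"
proof
  assume "reach (verts G, edges G - {{a, b}}) (B x) a b"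
  then have "minor_model (verts G, edges G - {{a, b}}) C B"
    using minor_model_del_edge[OF gC B x ab(1,2)] by blast
  moreover have "graph (verts G, edges G - {{a, b}})" using graph_spanning_subgraph[OF gG] by blast
  ultimately have "minor C (verts G, edges G - {{a, b}})" using minor_model_imp_minor gC by blast
  moreover have "edges G - {{a, b}} \<subset> edges G" using ab(3) unfolding adj_def by blast
  ultimately show False using minimal by blast
qed

section \<open>Labelled trees\<close>

definition side :: "'a graph \<Rightarrow> 'a set \<Rightarrow> 'a \<Rightarrow> 'a \<Rightarrow> 'a set" where
  "side G S c n = {z. reach G (S - {c}) n z}"

lemma side_subset: "side G S c n \<subseteq> S - {c}"
  unfolding side_def using reachD by fastforce

lemma side_self: "n \<in> S - {c} \<Longrightarrow> n \<in> side G S c n"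
  unfolding side_def by (simp add: reach_refl)

lemma side_closed: "z \<in> side G S c n \<Longrightarrow> w \<in> S - {c} \<Longrightarrow> adj G z w \<Longrightarrow> w \<in> side G S c n"
  unfolding side_def using reach_step by fastforce

lemma reach_side: "z \<in> side G S c n \<Longrightarrow> reach G (side G S c n) n z"
  unfolding side_def using reach_component by fastforce

lemma connected_on_side: "connected_on G (side G S c n)"
proof (cases "n \<in> S - {c}")
  case True
  show ?thesis by (rule connected_on_from[OF side_self[OF True] reach_side])
next
  case False
  then have "side G S c n = {}" unfolding side_def using reachD by fastforce
  then show ?thesis by (simp add: connected_on_def)
qed

lemma reach_del_edge_outside:
  assumes "reach G A p q" "c \<notin> A \<or> n \<notin> A"
  shows "reach (verts G, edges G - {{c, n}}) A p q"
  using assms(1)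
proof (rule reach_mono_adj)
  fix u v assume "u \<in> A" "v \<in> A" "adj G u v"
  then show "adj (verts G, edges G - {{c, n}}) u v" using assms(2) by (auto simp: doubleton_eq_iff)
qed

definition labels_seen :: "'b set \<Rightarrow> ('a \<Rightarrow> 'b \<Rightarrow> bool) \<Rightarrow> 'a set \<Rightarrow> 'b set" where
  "labels_seen L T P = {l \<in> L. \<exists>s\<in>P. T s l}"

lemma labels_seen_mono: "P \<subseteq> Q \<Longrightarrow> labels_seen L T P \<subseteq> labels_seen L T Q"
  unfolding labels_seen_def by blast

lemma finite_labels_seen: "finite L \<Longrightarrow> finite (labels_seen L T P)"
  unfolding labels_seen_def by simp

definition fan ::
  "'a graph \<Rightarrow> 'a set \<Rightarrow> 'a \<Rightarrow> 'b set \<Rightarrow> ('a \<Rightarrow> 'b \<Rightarrow> bool) \<Rightarrow> ('b \<Rightarrow> 'a list) \<Rightarrow> bool" where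
  "fan G S c L T \<pi> \<longleftrightarrow>
     (\<forall>l\<in>L. is_path G (\<pi> l) \<and> hd (\<pi> l) = c \<and> set (\<pi> l) \<subseteq> S \<and> T (last (\<pi> l)) l) \<and>
     (\<forall>l\<in>L. \<forall>l'\<in>L. l \<noteq> l' \<longrightarrow> set (\<pi> l) \<inter> set (\<pi> l') = {c})"

context
  fixes G :: "'a graph" and S :: "'a set"
  assumes gG: "graph G" and SV: "S \<subseteq> verts G" and cS: "connected_on G S"
    and bridges: "\<And>a b. a \<in> S \<Longrightarrow> b \<in> S \<Longrightarrow> adj G a b \<Longrightarrow>
      \<not> reach (verts G, edges G - {{a, b}}) S a b"
begin

lemma connected_on_Diff_side:
  assumes c: "c \<in> S"
  shows "connected_on G (S - side G S c n)"
proof (rule connected_on_from)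
  let ?Q = "S - side G S c n"
  show cQ: "c \<in> ?Q" using side_subset[of G S c n] c by blast
  have "z \<notin> side G S c n \<longrightarrow> reach G ?Q c z" if "(adj_on G S)\<^sup>*\<^sup>* c z" for z
    using that
  proof (induction rule: rtranclp_induct)
    case base
    show ?case using cQ by (simp add: reach_refl)
  next
    case (step y z)
    then have yz: "y \<in> S" "z \<in> S" "adj G y z" by (auto simp: adj_on_def)
    show ?case
    proof (cases "y \<in> side G S c n")
      case True
      then have "z \<notin> side G S c n \<longrightarrow> z = c" using side_closed[OF True _ yz(3)] yz(2) by blast
      then show ?thesis using reach_refl[of c ?Q G] cQ by auto
    next
      case False
      then have "reach G ?Q c y" using step.IH by blast
      then show ?thesis using reach_step[of G ?Q c y z] yz by blast
    qed
  qed
  then show "reach G ?Q c z" if "z \<in> ?Q" for z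
    using that connected_onD[OF cS c, of z] cQ by (simp add: reach_def)
qed

lemma side_disjoint:
  assumes "c \<in> S" "m \<in> S" "m' \<in> S" "adj G c m" "adj G c m'" "m \<noteq> m'"
  shows "side G S c m \<inter> side G S c m' = {}"
proof (rule ccontr)
  let ?G' = "(verts G, edges G - {{c, m}})"
  assume "side G S c m \<inter> side G S c m' \<noteq> {}"
  then obtain z where z: "reach G (S - {c}) m z" "reach G (S - {c}) m' z" unfolding side_def by auto
  have "reach G (S - {c}) m' m" using reach_trans[OF z(2) reach_sym[OF z(1)]] .
  then have "reach ?G' (S - {c}) m' m" by (rule reach_del_edge_outside) simp
  then have "reach ?G' S m' m" by (rule reach_mono) auto
  moreover have "adj ?G' c m'"
    using assms(5,6) graph_adjD[OF gG assms(5)] by (auto simp: doubleton_eq_iff)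
  then have "reach ?G' S c m'" by (rule reach_edge[OF assms(1,3)])
  ultimately have "reach ?G' S c m" by (rule reach_trans[rotated])
  then show False using bridges[OF assms(1,2,4)] by simp
qed

lemma side_psubset:
  assumes "c \<in> S" "n \<in> S" "m \<in> S" "adj G c n" "adj G n m" "m \<noteq> c"
  shows "side G S n m \<subset> side G S c n"
proof -
  let ?G' = "(verts G, edges G - {{n, m}})"
  have cn: "c \<noteq> n" using graph_adjD[OF gG assms(4)] by simp
  have c_outside: "c \<notin> side G S n m"
  proof
    assume "c \<in> side G S n m"
    then have "reach G (S - {n}) m c" unfolding side_def by simp
    then have "reach ?G' (S - {n}) m c" by (rule reach_del_edge_outside) simp
    then have "reach ?G' S m c" by (rule reach_mono) auto
    moreover have "adj ?G' c n" using assms(4,6) cn by (auto simp: doubleton_eq_iff)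
    then have "reach ?G' S c n" by (rule reach_edge[OF assms(1,2)])
    ultimately have "reach ?G' S m n" by (rule reach_trans)
    then have "reach ?G' S n m" by (rule reach_sym)
    then show False using bridges[OF assms(2,3,5)] by simp
  qed
  have "side G S n m \<subseteq> side G S c n"
  proof
    fix z assume z: "z \<in> side G S n m"
    have "side G S n m \<subseteq> S - {c}" using side_subset c_outside by fast
    with reach_side[OF z] have "reach G (S - {c}) m z" by (rule reach_mono)
    moreover have "reach G (S - {c}) n m" using assms cn by (intro reach_edge) auto
    ultimately have "reach G (S - {c}) n z" by (rule reach_trans[rotated])
    then show "z \<in> side G S c n" unfolding side_def by simp
  qed
  moreover have "n \<in> side G S c n" "n \<notin> side G S n m"
    using side_self side_subset assms(2) cn by fast+
  ultimately show ?thesis by blast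
qed

lemma side_back_subset:
  assumes "c \<in> S" "n \<in> S" "adj G c n"
  shows "side G S n c \<subseteq> S - side G S c n"
proof
  let ?G' = "(verts G, edges G - {{c, n}})"
  fix z assume z: "z \<in> side G S n c"
  have "z \<notin> side G S c n"
  proof
    assume "z \<in> side G S c n"
    then have "reach G (S - {c}) n z" "reach G (S - {n}) c z" using z unfolding side_def by simp_all
    then have "reach ?G' (S - {c}) n z" "reach ?G' (S - {n}) c z"
      by (simp_all add: reach_del_edge_outside)
    then have nz: "reach ?G' S n z" and cz: "reach ?G' S c z"
      by (simp_all add: reach_mono[of _ "S - _" _ _ S])
    have "reach ?G' S c n" using reach_trans[OF cz reach_sym[OF nz]] .
    then show False using bridges[OF assms] by simp
  qed
  then show "z \<in> S - side G S c n" using z side_subset by fast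
qed

lemma path_into_side:
  assumes c: "c \<in> S" and s: "s \<in> S" "s \<noteq> c"
  obtains m q where "m \<in> S" "adj G c m" "is_path G (c # q)" "q \<noteq> []" "last q = s"
    "set q \<subseteq> side G S c m"
proof -
  obtain p where p: "is_path G p" "hd p = c" "last p = s" "set p \<subseteq> S"
    using reach_imp_path[OF connected_onD[OF cS c s(1)] SV] by blast
  then obtain q where pq: "p = c # q" using is_path_nonempty[OF p(1)] by (cases p) auto
  then have q: "q \<noteq> []" "last q = s" using p(3) s(2) by auto
  have "is_path G q \<and> adj G c (hd q) \<and> c \<notin> set q"
    using is_path_ConsD[of G c q] p(1) pq q(1) by simp
  then have q': "is_path G q" "adj G c (hd q)" "set q \<subseteq> S - {c}" using p(4) pq by auto
  then have "hd q \<in> S" using q(1) hd_in_set by blast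
  have "reach G (S - {c}) (hd q) z" if "z \<in> set q" for z
    using path_imp_reach[OF q'(1) q'(3) that] .
  then have "set q \<subseteq> side G S c (hd q)" unfolding side_def by blast
  with \<open>hd q \<in> S\<close> q'(2) p(1) pq q show thesis by (intro that) simp_all
qed

context
  fixes L :: "'b set" and T :: "'a \<Rightarrow> 'b \<Rightarrow> bool"
  assumes finL: "finite L"
begin

lemma exists_label_centre:
  assumes "S \<noteq> {}"
    and no_split: "\<And>c n. c \<in> S \<Longrightarrow> n \<in> S \<Longrightarrow> adj G c n \<Longrightarrow>
      2 \<le> card (labels_seen L T (side G S c n)) \<Longrightarrow> card (labels_seen L T (S - side G S c n)) \<le> 1"
  obtains c where "c \<in> S"
    "\<And>m. m \<in> S \<Longrightarrow> adj G c m \<Longrightarrow> card (labels_seen L T (side G S c m)) \<le> 1"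
proof (cases "\<exists>c n. c \<in> S \<and> n \<in> S \<and> adj G c n \<and> 2 \<le> card (labels_seen L T (side G S c n))")
  case True
  txt \<open>Among the oriented edges \<open>(c, n)\<close> whose far side sees two labels, one with the smallest
    far side has a centre as its head.\<close>
  define heavy where
    "heavy e \<longleftrightarrow> fst e \<in> S \<and> snd e \<in> S \<and> adj G (fst e) (snd e) \<and>
       2 \<le> card (labels_seen L T (side G S (fst e) (snd e)))" for e
  obtain e0 where "heavy e0" using True unfolding heavy_def by auto
  then obtain c n where "heavy (c, n)"
    and least: "\<And>e. heavy e \<Longrightarrow> card (side G S c n) \<le> card (side G S (fst e) (snd e))"
    using ex_has_least_nat[of heavy e0 "\<lambda>e. card (side G S (fst e) (snd e))"] by force
  then have cn: "c \<in> S" "n \<in> S" "adj G c n" "2 \<le> card (labels_seen L T (side G S c n))"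
    unfolding heavy_def by auto
  show thesis
  proof (rule that[OF cn(2)])
    fix m assume m: "m \<in> S" "adj G n m"
    show "card (labels_seen L T (side G S n m)) \<le> 1"
    proof (cases "m = c")
      case True
      then have "labels_seen L T (side G S n m) \<subseteq> labels_seen L T (S - side G S c n)"
        using labels_seen_mono[OF side_back_subset[OF cn(1-3)]] by simp
      then have "card (labels_seen L T (side G S n m)) \<le> card (labels_seen L T (S - side G S c n))"
        by (rule card_mono[OF finite_labels_seen[OF finL]])
      then show ?thesis using no_split[OF cn] by simp
    next
      case False
      have "finite S" using SV gG finite_subset unfolding graph_def by blast
      then have "finite (side G S c n)" using side_subset[of G S c n] finite_subset by blast
      then have "card (side G S n m) < card (side G S c n)"
        using side_psubset[OF cn(1,2) m(1) cn(3) m(2) False] by (rule psubset_card_mono)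
      then have "\<not> heavy (n, m)" using least[of "(n, m)"] by auto
      then show ?thesis using cn(2) m unfolding heavy_def by simp
    qed
  qed
next
  case False
  obtain s where "s \<in> S" using assms(1) by blast
  then show thesis using that[of s] False by fastforce
qed

lemma fan_at_label_centre:
  assumes c: "c \<in> S"
    and centre: "\<And>m. m \<in> S \<Longrightarrow> adj G c m \<Longrightarrow> card (labels_seen L T (side G S c m)) \<le> 1"
    and cover: "\<And>l. l \<in> L \<Longrightarrow> \<exists>s\<in>S. T s l"
  shows "\<exists>\<pi>. fan G S c L T \<pi>"
proof -
  define good where "good l p \<longleftrightarrow> is_path G p \<and> hd p = c \<and> set p \<subseteq> S \<and> T (last p) l \<and>
    (p = [c] \<or> (\<exists>m q. m \<in> S \<and> adj G c m \<and> p = c # q \<and> q \<noteq> [] \<and> set q \<subseteq> side G S c m))" for l p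
  have "\<exists>p. good l p" if l: "l \<in> L" for l
  proof (cases "T c l")
    case True
    then show ?thesis using c SV unfolding good_def by (intro exI[of _ "[c]"]) auto
  next
    case False
    obtain s where s: "s \<in> S" "T s l" using cover l by blast
    then have "s \<noteq> c" using False by auto
    then obtain m q where mq: "m \<in> S" "adj G c m" "is_path G (c # q)" "q \<noteq> []" "last q = s"
      "set q \<subseteq> side G S c m"
      using path_into_side[OF c s(1)] by blast
    then have "set (c # q) \<subseteq> S" using c side_subset[of G S c m] by auto
    then show ?thesis using mq s(2) unfolding good_def by (intro exI[of _ "c # q"]) auto
  qed
  then have "\<forall>l\<in>L. \<exists>p. good l p" by blast
  from bchoice[OF this] obtain \<pi> where "\<forall>l\<in>L. good l (\<pi> l)" ..
  then have \<pi>: "good l (\<pi> l)" if "l \<in> L" for l using that by blast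
  have "set (\<pi> l) \<inter> set (\<pi> l') = {c}" if l: "l \<in> L" "l' \<in> L" "l \<noteq> l'" for l l'
  proof -
    have c_in: "c \<in> set (\<pi> k)" if "k \<in> L" for k
      using \<pi>[OF that] is_path_nonempty[of G "\<pi> k"] hd_in_set[of "\<pi> k"] unfolding good_def by auto
    have shape: "\<pi> k = [c] \<or>
        (\<exists>m q. m \<in> S \<and> adj G c m \<and> \<pi> k = c # q \<and> q \<noteq> [] \<and> set q \<subseteq> side G S c m)"
      if "k \<in> L" for k
      using \<pi>[OF that] unfolding good_def by blast
    show ?thesis
    proof (cases "\<pi> l = [c] \<or> \<pi> l' = [c]")
      case True
      then show ?thesis using c_in l by auto
    next
      case False
      then obtain m q m' q' where 2: "m \<in> S" "adj G c m" "\<pi> l = c # q" "q \<noteq> []"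
        "set q \<subseteq> side G S c m" "m' \<in> S" "adj G c m'" "\<pi> l' = c # q'" "q' \<noteq> []"
        "set q' \<subseteq> side G S c m'"
        using shape[OF l(1)] shape[OF l(2)] by blast
      have "m \<noteq> m'"
      proof
        assume "m = m'"
        have "last q \<in> side G S c m" "last q' \<in> side G S c m"
          using 2(4,5,9,10) \<open>m = m'\<close> last_in_set by blast+
        moreover have "T (last (\<pi> l)) l" "T (last (\<pi> l')) l'"
          using \<pi>[OF l(1)] \<pi>[OF l(2)] unfolding good_def by blast+
        then have "T (last q) l" "T (last q') l'" using 2 by simp_all
        ultimately have "{l, l'} \<subseteq> labels_seen L T (side G S c m)"
          using l unfolding labels_seen_def by blast
        then have "card {l, l'} \<le> card (labels_seen L T (side G S c m))"
          by (rule card_mono[OF finite_labels_seen[OF finL]])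
        then have "2 \<le> card (labels_seen L T (side G S c m))" using l(3) by simp
        then show False using centre[OF 2(1,2)] by simp
      qed
      then have "side G S c m \<inter> side G S c m' = {}"
        using side_disjoint[OF c 2(1) 2(6) 2(2) 2(7)] by blast
      moreover have "c \<notin> side G S c m" "c \<notin> side G S c m'"
        using side_subset[of G S c m] side_subset[of G S c m'] by blast+
      ultimately have "set q \<inter> set q' = {}" "c \<notin> set q" "c \<notin> set q'" using 2(5,10) by blast+
      then show ?thesis using 2(3,8) by auto
    qed
  qed
  then show ?thesis using \<pi> unfolding fan_def good_def by blast
qed

lemma tree_split_or_fan:
  assumes "S \<noteq> {}" and cover: "\<And>l. l \<in> L \<Longrightarrow> \<exists>s\<in>S. T s l"
  shows "(\<exists>P1 P2. P1 \<union> P2 = S \<and> P1 \<inter> P2 = {} \<and> connected_on G P1 \<and> connected_on G P2 \<and>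
            (\<exists>a\<in>P1. \<exists>b\<in>P2. adj G a b) \<and>
            2 \<le> card (labels_seen L T P1) \<and> 2 \<le> card (labels_seen L T P2)) \<or>
         (\<exists>c\<in>S. \<exists>\<pi>. fan G S c L T \<pi>)"
proof (cases "\<exists>c n. c \<in> S \<and> n \<in> S \<and> adj G c n \<and> 2 \<le> card (labels_seen L T (side G S c n)) \<and>
                2 \<le> card (labels_seen L T (S - side G S c n))")
  case True
  then obtain c n where cn: "c \<in> S" "n \<in> S" "adj G c n"
    "2 \<le> card (labels_seen L T (side G S c n))" "2 \<le> card (labels_seen L T (S - side G S c n))"
    by blast
  have "c \<noteq> n" using graph_adjD[OF gG cn(3)] by simp
  then have "n \<in> side G S c n" "c \<in> S - side G S c n"
    using side_self[of n S c G] side_subset[of G S c n] cn(1,2) by auto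
  then have "\<exists>a\<in>side G S c n. \<exists>b\<in>S - side G S c n. adj G a b" using adj_sym[OF cn(3)] by blast
  moreover have "side G S c n \<union> (S - side G S c n) = S" using side_subset[of G S c n] by blast
  moreover have "side G S c n \<inter> (S - side G S c n) = {}" by blast
  ultimately show ?thesis
    using cn(4,5) connected_on_side[of G S c n] connected_on_Diff_side[OF cn(1), of n]
    by (intro disjI1 exI[of _ "side G S c n"] exI[of _ "S - side G S c n"]) simp
next
  case False
  have no_split: "card (labels_seen L T (S - side G S c n)) \<le> 1"
    if "c \<in> S" "n \<in> S" "adj G c n" "2 \<le> card (labels_seen L T (side G S c n))" for c n
  proof -
    have "\<not> 2 \<le> card (labels_seen L T (S - side G S c n))" using that False by blast
    then show ?thesis by simp
  qed
  obtain c where "c \<in> S"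
    "\<And>m. m \<in> S \<Longrightarrow> adj G c m \<Longrightarrow> card (labels_seen L T (side G S c m)) \<le> 1"
    using exists_label_centre[OF assms(1) no_split] by blast
  then have "\<exists>\<pi>. fan G S c L T \<pi>" by (rule fan_at_label_centre[OF _ _ cover])
  then show ?thesis using \<open>c \<in> S\<close> by (intro disjI2 bexI)
qed

end

end

section \<open>Splitting a vertex\<close>

definition split_vertex :: "'a graph \<Rightarrow> 'a \<Rightarrow> 'a \<Rightarrow> 'a set \<Rightarrow> 'a set \<Rightarrow> 'a graph" where
  "split_vertex C x p L1 L2 = (verts C \<union> {p},
     {e \<in> edges C. x \<notin> e} \<union> {{x, y} |y. y \<in> L1} \<union> {{p, y} |y. y \<in> L2} \<union> {{x, p}})"

context
  fixes C :: "'a graph" and x p :: 'a and L1 L2 :: "'a set"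
  assumes gC: "graph C" and x: "x \<in> verts C" and p: "p \<notin> verts C"
    and L: "L1 \<union> L2 = neighbours C x"
begin

lemma graph_split_vertex: "graph (split_vertex C x p L1 L2)"
  unfolding graph_def
proof (intro conjI ballI)
  show "finite (verts (split_vertex C x p L1 L2))"
    using gC unfolding graph_def split_vertex_def by simp
  have N: "L1 \<subseteq> verts C - {x}" "L2 \<subseteq> verts C - {x}"
    using L neighbours_subset_verts[OF gC] self_notin_neighbours[OF gC] by blast+
  fix e assume "e \<in> edges (split_vertex C x p L1 L2)"
  then show "\<exists>u v. e = {u, v} \<and> u \<noteq> v \<and> u \<in> verts (split_vertex C x p L1 L2) \<and>
      v \<in> verts (split_vertex C x p L1 L2)"
    unfolding split_vertex_def using graph_edgeD[OF gC] N x p by fastforce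
qed

lemma card_edges_split_vertex: "card (edges C) < card (edges (split_vertex C x p L1 L2))"
proof -
  let ?E = "edges (split_vertex C x p L1 L2)"
  define g where "g e = (if x \<in> e \<and> \<not> e - {x} \<subseteq> L1 then insert p (e - {x}) else e)" for e
  have xp: "x \<noteq> p" using x p by blast
  have p_notin: "p \<notin> e" if "e \<in> edges C" for e using graph_edge_subset_verts[OF gC that] p by blast
  have g_moved: "g e = insert p (e - {x})" if "x \<in> e \<and> \<not> e - {x} \<subseteq> L1" for e
    unfolding g_def using that by (rule if_P)
  have g_fixed: "g e = e" if "\<not> (x \<in> e \<and> \<not> e - {x} \<subseteq> L1)" for e
    unfolding g_def using that by (rule if_not_P)
  have "inj_on g (edges C)"
  proof (rule inj_on_inverseI)
    fix e assume e: "e \<in> edges C"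
    show "(\<lambda>f. if p \<in> f then insert x (f - {p}) else f) (g e) = e"
    proof (cases "x \<in> e \<and> \<not> e - {x} \<subseteq> L1")
      case True
      have "insert x (insert p (e - {x}) - {p}) = e" using True p_notin[OF e] by blast
      then show ?thesis using g_moved[OF True] by simp
    qed (simp add: g_fixed p_notin[OF e])
  qed
  moreover have "g e \<in> ?E" if e: "e \<in> edges C" for e
  proof (cases "x \<in> e")
    case True
    obtain u v where "e = {u, v}" "u \<noteq> v" using graph_edgeD[OF gC e] by blast
    then obtain y where y: "e = {x, y}" "y \<noteq> x" using True by blast
    then have "y \<in> L1 \<union> L2" using e L unfolding neighbours_def adj_def by simp
    then consider "y \<in> L1" | "y \<in> L2" "y \<notin> L1" by blast
    then show ?thesis
    proof cases
      case 1
      then have "g e = {x, y}" using g_fixed y by simp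
      then show ?thesis using 1 unfolding split_vertex_def by auto
    next
      case 2
      then have "g e = {p, y}" using g_moved y by simp
      then show ?thesis using 2 unfolding split_vertex_def by auto
    qed
  next
    case False
    then show ?thesis using e g_fixed unfolding split_vertex_def by simp
  qed
  moreover have "{x, p} \<noteq> g e" if e: "e \<in> edges C" for e
  proof (cases "x \<in> e \<and> \<not> e - {x} \<subseteq> L1")
    case True
    then show ?thesis using g_moved xp by auto
  next
    case False
    then show ?thesis using g_fixed p_notin[OF e] by auto
  qed
  moreover have "{x, p} \<in> ?E" "finite ?E"
    using graph_finite_edges[OF graph_split_vertex] unfolding split_vertex_def by auto
  ultimately have "g ` edges C \<subset> ?E" "finite ?E" by blast+
  then have "card (g ` edges C) < card ?E" by (simp add: psubset_card_mono)
  then show ?thesis using \<open>inj_on g (edges C)\<close> by (simp add: card_image)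
qed

lemma min_degree_split_vertex:
  assumes "min_degree_ge C 3" "2 \<le> card L1" "2 \<le> card L2"
  shows "min_degree_ge (split_vertex C x p L1 L2) 3"
  unfolding min_degree_ge_def degree_def
proof
  let ?S = "split_vertex C x p L1 L2"
  have fin: "finite (neighbours ?S w)" for w by (rule graph_finite_neighbours[OF graph_split_vertex])
  have finN: "finite (neighbours C w)" for w by (rule graph_finite_neighbours[OF gC])
  have N: "L1 \<subseteq> verts C - {x}" "L2 \<subseteq> verts C - {x}"
    using L neighbours_subset_verts[OF gC] self_notin_neighbours[OF gC] by blast+
  have grow: "Suc (card A) \<le> card (neighbours ?S w)"
    if "finite A" "z \<notin> A" "insert z A \<subseteq> neighbours ?S w" for A z w
    using card_mono[OF fin that(3)] that(1,2) by simp
  fix w assume w: "w \<in> verts ?S"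
  show "3 \<le> card (neighbours ?S w)"
  proof -
    consider "w = x" | "w = p" | "w \<in> verts C" "w \<noteq> x"
      using w unfolding split_vertex_def by auto
    then show ?thesis
    proof cases
      case 1
      have "insert p L1 \<subseteq> neighbours ?S w"
        using 1 by (auto simp: neighbours_def adj_def split_vertex_def)
      then show ?thesis using grow[of L1 p] N(1) p finite_subset[OF N(1)] gC assms(2)
        unfolding graph_def by fastforce
    next
      case 2
      have "insert x L2 \<subseteq> neighbours ?S w"
        using 2 by (auto simp: neighbours_def adj_def split_vertex_def insert_commute)
      then show ?thesis using grow[of L2 x] N(2) finite_subset[OF N(2)] gC assms(3)
        unfolding graph_def by fastforce
    next
      case 3
      have keep: "neighbours C w - {x} \<subseteq> neighbours ?S w"
        using 3(2) unfolding split_vertex_def neighbours_def adj_def by auto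
      have deg: "3 \<le> card (neighbours C w)" using min_degree_geD[OF assms(1) 3(1)] .
      show ?thesis
      proof (cases "x \<in> neighbours C w")
        case False
        then show ?thesis using keep card_mono[OF fin, of "neighbours C w" w] deg by auto
      next
        case True
        then have "w \<in> L1 \<union> L2" using L unfolding neighbours_def by (simp add: adj_sym)
        then obtain z where z: "z \<in> {x, p}" "z \<in> neighbours ?S w"
          by (auto simp: neighbours_def adj_def split_vertex_def insert_commute)
        moreover have "z \<notin> neighbours C w - {x}"
          using z(1) p neighbours_subset_verts[OF gC] by auto
        ultimately have "Suc (card (neighbours C w - {x})) \<le> card (neighbours ?S w)"
          using grow[of "neighbours C w - {x}" z] keep finN by simp
        then show ?thesis using deg True finN by (simp add: card_Diff_singleton)
      qed
    qed
  qed
qed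

end

definition adj_branch :: "'a graph \<Rightarrow> ('a \<Rightarrow> 'a set) \<Rightarrow> 'a \<Rightarrow> 'a \<Rightarrow> bool" where
  "adj_branch G B s y \<longleftrightarrow> (\<exists>b\<in>B y. adj G s b)"

lemma labels_seen_branch_partition:
  assumes B: "minor_model G C B" and P: "P1 \<union> P2 = B x"
  shows "labels_seen (neighbours C x) (adj_branch G B) P1 \<union>
    labels_seen (neighbours C x) (adj_branch G B) P2 = neighbours C x"
proof -
  have "\<exists>s\<in>B x. adj_branch G B s y" if "y \<in> neighbours C x" for y
    using that minor_modelD(5)[OF B, of x y] unfolding neighbours_def adj_def adj_branch_def by blast
  then show ?thesis using P unfolding labels_seen_def by blast
qed

lemma minor_model_split_vertex:
  assumes gC: "graph C" and B: "minor_model G C B" and x: "x \<in> verts C"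
    and P: "P1 \<union> P2 = B x" "P1 \<inter> P2 = {}" "connected_on G P1" "connected_on G P2" "x \<in> P1"
    and ab: "a \<in> P1" "b \<in> P2" "adj G a b"
  defines "L1 \<equiv> labels_seen (neighbours C x) (adj_branch G B) P1"
    and "L2 \<equiv> labels_seen (neighbours C x) (adj_branch G B) P2"
  shows "b \<notin> verts C" and "minor_model G (split_vertex C x b L1 L2) (B(x := P1, b := P2))"
proof -
  define B' where "B' = B(x := P1, b := P2)"
  have bx: "b \<noteq> x" using ab(2) P(2,5) by blast
  show b: "b \<notin> verts C"
    using minor_model_branch_unique[OF B _ x, of b b] minor_modelD(1)[OF B, of b] ab(2) P(1) bx by blast
  have B'x: "B' x = P1" and B'b: "B' b = P2" unfolding B'_def using bx by simp_all
  have B'_other: "B' w = B w" if "w \<noteq> x" "w \<noteq> b" for w unfolding B'_def using that by simp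
  have split_disjoint: "B x \<inter> B w = {}" if "w \<in> verts C" "w \<noteq> x" for w
    using minor_modelD(4)[OF B x that(1)] that(2) by auto
  have L: "L1 \<subseteq> neighbours C x" "L2 \<subseteq> neighbours C x"
    unfolding L1_def L2_def labels_seen_def by auto
  have N: "y \<in> verts C" "y \<noteq> x" "y \<noteq> b" if "y \<in> neighbours C x" for y
    using that neighbours_subset_verts[OF gC] self_notin_neighbours[OF gC] b by blast+
  have "minor_model G (split_vertex C x b L1 L2) B'"
  proof (rule minor_modelI)
    fix w assume "w \<in> verts (split_vertex C x b L1 L2)"
    then consider "w = x" | "w = b" | "w \<in> verts C" "w \<noteq> x" "w \<noteq> b"
      unfolding split_vertex_def by auto
    then have "w \<in> B' w \<and> B' w \<subseteq> verts G \<and> connected_on G (B' w)"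
    proof cases
      case 1
      then show ?thesis
        using B'x P minor_modelD(2)[OF B x] by auto
    next
      case 2
      then show ?thesis
        using B'b P ab(2) minor_modelD(2)[OF B x] by auto
    next
      case 3
      then show ?thesis
        using B'_other minor_modelD(1-3)[OF B 3(1)] by auto
    qed
    then show "w \<in> B' w" "B' w \<subseteq> verts G" "connected_on G (B' w)" by blast+
  next
    fix w z assume w: "w \<in> verts (split_vertex C x b L1 L2)" and z: "z \<in> verts (split_vertex C x b L1 L2)"
      and "w \<noteq> z"
    have inside: "B' v \<subseteq> B x" if "v = x \<or> v = b" for v using that B'x B'b P(1) by blast
    show "B' w \<inter> B' z = {}"
    proof (cases "w = x \<or> w = b"; cases "z = x \<or> z = b")
      assume "w = x \<or> w = b" "z = x \<or> z = b"
      then show ?thesis using \<open>w \<noteq> z\<close> B'x B'b P(2) by auto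
    next
      assume "w = x \<or> w = b" "\<not> (z = x \<or> z = b)"
      then show ?thesis
        using inside[of w] B'_other[of z] split_disjoint[of z] z unfolding split_vertex_def by auto
    next
      assume "\<not> (w = x \<or> w = b)" "z = x \<or> z = b"
      then show ?thesis
        using inside[of z] B'_other[of w] split_disjoint[of w] w unfolding split_vertex_def by auto
    next
      assume "\<not> (w = x \<or> w = b)" "\<not> (z = x \<or> z = b)"
      then show ?thesis
        using B'_other[of w] B'_other[of z] minor_modelD(4)[OF B, of w z] w z \<open>w \<noteq> z\<close>
        unfolding split_vertex_def by auto
    qed
  next
    fix u v assume "{u, v} \<in> edges (split_vertex C x b L1 L2)"
    then consider "{u, v} \<in> edges C" "x \<notin> {u, v}"
      | y where "{u, v} = {x, y}" "y \<in> L1" | y where "{u, v} = {b, y}" "y \<in> L2"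
      | "{u, v} = {x, b}"
      unfolding split_vertex_def by auto
    then show "\<exists>s\<in>B' u. \<exists>t\<in>B' v. adj G s t"
    proof cases
      case 1
      then have "u \<noteq> b" "v \<noteq> b"
        using graph_edge_subset_verts[OF gC 1(1)] b by auto
      then have "B' u = B u" "B' v = B v" using B'_other 1(2) by auto
      then show ?thesis using minor_modelD(5)[OF B 1(1)] by simp
    next
      case (2 y)
      obtain s t where st: "s \<in> P1" "t \<in> B y" "adj G s t"
        using 2(2) unfolding L1_def labels_seen_def adj_branch_def by blast
      have "B' y = B y" using B'_other N[of y] L(1) 2(2) by blast
      then show ?thesis
        using 2(1) st B'x adj_sym[OF st(3)] by (auto simp: doubleton_eq_iff)
    next
      case (3 y)
      obtain s t where st: "s \<in> P2" "t \<in> B y" "adj G s t"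
        using 3(2) unfolding L2_def labels_seen_def adj_branch_def by blast
      have "B' y = B y" using B'_other N[of y] L(2) 3(2) by blast
      then show ?thesis
        using 3(1) st B'b adj_sym[OF st(3)] by (auto simp: doubleton_eq_iff)
    next
      case 4
      then show ?thesis using ab B'x B'b adj_sym[OF ab(3)] by (auto simp: doubleton_eq_iff)
    qed
  qed
  then show "minor_model G (split_vertex C x b L1 L2) (B(x := P1, b := P2))"
    unfolding B'_def .
qed

lemma split_branch_set_larger_minor:
  assumes gG: "graph G" and gC: "graph C" and B: "minor_model G C B" and x: "x \<in> verts C"
    and md: "min_degree_ge C 3"
    and P: "P1 \<union> P2 = B x" "P1 \<inter> P2 = {}" "connected_on G P1" "connected_on G P2" "x \<in> P1"
    and ab: "a \<in> P1" "b \<in> P2" "adj G a b"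
    and L: "2 \<le> card (labels_seen (neighbours C x) (adj_branch G B) P1)"
      "2 \<le> card (labels_seen (neighbours C x) (adj_branch G B) P2)"
  shows "\<exists>H. minor H G \<and> min_degree_ge H 3 \<and> card (edges C) < card (edges H)"
proof -
  let ?L1 = "labels_seen (neighbours C x) (adj_branch G B) P1"
  let ?L2 = "labels_seen (neighbours C x) (adj_branch G B) P2"
  let ?H = "split_vertex C x b ?L1 ?L2"
  have b: "b \<notin> verts C" by (rule minor_model_split_vertex(1)[OF gC B x P ab])
  have cover: "?L1 \<union> ?L2 = neighbours C x" by (rule labels_seen_branch_partition[OF B P(1)])
  have "minor ?H G"
    using minor_model_imp_minor[OF gG graph_split_vertex[OF gC x b cover]]
      minor_model_split_vertex(2)[OF gC B x P ab] by blast
  moreover have "min_degree_ge ?H 3" by (rule min_degree_split_vertex[OF gC x b cover md L])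
  moreover have "card (edges C) < card (edges ?H)" by (rule card_edges_split_vertex[OF gC x b cover])
  ultimately show ?thesis by blast
qed

lemma edge_minimal_host_branch_fan:
  assumes gG: "graph G" and gC: "graph C" and B: "minor_model G C B" and x: "x \<in> verts C"
    and md: "min_degree_ge C 3"
    and maximal: "\<And>H. minor H G \<Longrightarrow> min_degree_ge H 3 \<Longrightarrow> card (edges H) \<le> card (edges C)"
    and minimal: "\<And>E. E \<subset> edges G \<Longrightarrow> \<not> minor C (verts G, E)"
  shows "\<exists>c\<in>B x. \<exists>\<pi>. fan G (B x) c (neighbours C x) (adj_branch G B) \<pi>"
proof -
  let ?L = "labels_seen (neighbours C x) (adj_branch G B)"
  have bridges: "\<not> reach (verts G, edges G - {{a, b}}) (B x) a b"
    if "a \<in> B x" "b \<in> B x" "adj G a b" for a b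
    using minimal_host_branch_edge_is_bridge[OF gG gC B x that minimal] .
  have cover: "\<exists>s\<in>B x. adj_branch G B s l" if "l \<in> neighbours C x" for l
    using that minor_modelD(5)[OF B, of x l] unfolding neighbours_def adj_def adj_branch_def by blast
  have no_split: "\<not> (\<exists>Q1 Q2. Q1 \<union> Q2 = B x \<and> Q1 \<inter> Q2 = {} \<and> connected_on G Q1 \<and> connected_on G Q2 \<and>
      (\<exists>a\<in>Q1. \<exists>b\<in>Q2. adj G a b) \<and> 2 \<le> card (?L Q1) \<and> 2 \<le> card (?L Q2))"
  proof
    assume "\<exists>Q1 Q2. Q1 \<union> Q2 = B x \<and> Q1 \<inter> Q2 = {} \<and> connected_on G Q1 \<and> connected_on G Q2 \<and>
      (\<exists>a\<in>Q1. \<exists>b\<in>Q2. adj G a b) \<and> 2 \<le> card (?L Q1) \<and> 2 \<le> card (?L Q2)"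
    then obtain Q1 Q2 a b where Q: "Q1 \<union> Q2 = B x" "Q1 \<inter> Q2 = {}" "connected_on G Q1"
      "connected_on G Q2" "a \<in> Q1" "b \<in> Q2" "adj G a b" "2 \<le> card (?L Q1)" "2 \<le> card (?L Q2)"
      by blast
    have "x \<in> Q1 \<or> x \<in> Q2" using minor_modelD(1)[OF B x] Q(1) by blast
    then obtain H where "minor H G" "min_degree_ge H 3" "card (edges C) < card (edges H)"
    proof
      assume "x \<in> Q1"
      then show thesis
        using that split_branch_set_larger_minor[OF gG gC B x md Q(1-4) _ Q(5-9)] by blast
    next
      assume "x \<in> Q2"
      have "Q2 \<union> Q1 = B x" "Q2 \<inter> Q1 = {}" using Q(1,2) by auto
      then show thesis
        using that split_branch_set_larger_minor[OF gG gC B x md _ _ Q(4,3) \<open>x \<in> Q2\<close> Q(6,5)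
            adj_sym[OF Q(7)] Q(9,8)] by blast
    qed
    then show False using maximal[of H] by simp
  qed
  have "B x \<noteq> {}" using minor_modelD(1)[OF B x] by blast
  with tree_split_or_fan[OF gG minor_modelD(2)[OF B x] minor_modelD(3)[OF B x] bridges
      graph_finite_neighbours[OF gC]] cover no_split
  show ?thesis by blast
qed

section \<open>Branch-set representatives\<close>

definition graph_image :: "('a \<Rightarrow> 'b) \<Rightarrow> 'a graph \<Rightarrow> 'b graph" where
  "graph_image f G = (f ` verts G, (`) f ` edges G)"

context
  fixes f :: "'a \<Rightarrow> 'b" and C :: "'a graph"
  assumes gC: "graph C" and inj: "inj_on f (verts C)"
begin

lemma adj_graph_image:
  assumes "u \<in> verts C" "v \<in> verts C"
  shows "adj (graph_image f C) (f u) (f v) \<longleftrightarrow> adj C u v"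
proof
  assume "adj (graph_image f C) (f u) (f v)"
  then obtain e where e: "e \<in> edges C" "f ` {u, v} = f ` e"
    unfolding adj_def graph_image_def by auto
  have "{u, v} \<subseteq> verts C" using assms by simp
  then have "{u, v} = e"
    using inj_on_image_eq_iff[OF inj _ graph_edge_subset_verts[OF gC e(1)]] e(2) by blast
  then show "adj C u v" using e(1) unfolding adj_def by simp
next
  assume "adj C u v"
  then have "f ` {u, v} \<in> (`) f ` edges C" unfolding adj_def by blast
  then show "adj (graph_image f C) (f u) (f v)" unfolding adj_def graph_image_def by simp
qed

lemma graph_graph_image: "graph (graph_image f C)"
  unfolding graph_def
proof (intro conjI ballI)
  show "finite (verts (graph_image f C))" using gC unfolding graph_def graph_image_def by simp
  fix e assume "e \<in> edges (graph_image f C)"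
  then obtain e0 where e0: "e0 \<in> edges C" "e = f ` e0" unfolding graph_image_def by auto
  obtain u v where uv: "e0 = {u, v}" "u \<noteq> v" "u \<in> verts C" "v \<in> verts C"
    using graph_edgeD[OF gC e0(1)] by blast
  have "f u \<noteq> f v" using inj_onD[OF inj _ uv(3) uv(4)] uv(2) by blast
  moreover have "e = {f u, f v}" "f u \<in> verts (graph_image f C)" "f v \<in> verts (graph_image f C)"
    using uv e0 unfolding graph_image_def by simp_all
  ultimately show "\<exists>p q. e = {p, q} \<and> p \<noteq> q \<and> p \<in> verts (graph_image f C) \<and>
      q \<in> verts (graph_image f C)"
    by blast
qed

lemma neighbours_graph_image:
  assumes x: "x \<in> verts C"
  shows "neighbours (graph_image f C) (f x) = f ` neighbours C x"
proof
  show "neighbours (graph_image f C) (f x) \<subseteq> f ` neighbours C x"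
  proof
    fix w assume "w \<in> neighbours (graph_image f C) (f x)"
    then have w: "adj (graph_image f C) (f x) w" unfolding neighbours_def by simp
    then obtain y where y: "y \<in> verts C" "w = f y"
      using graph_adjD[OF graph_graph_image w] unfolding graph_image_def by auto
    then show "w \<in> f ` neighbours C x"
      using adj_graph_image[OF x y(1)] w unfolding neighbours_def by simp
  qed
  show "f ` neighbours C x \<subseteq> neighbours (graph_image f C) (f x)"
    using adj_graph_image[OF x] neighbours_subset_verts[OF gC]
    unfolding neighbours_def by auto
qed

lemma card_edges_graph_image: "card (edges (graph_image f C)) = card (edges C)"
proof -
  have "inj_on ((`) f) (edges C)"
  proof (rule inj_onI)
    fix e e' assume e: "e \<in> edges C" "e' \<in> edges C" "f ` e = f ` e'"
    then show "e = e'"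
      using inj_on_image_eq_iff[OF inj graph_edge_subset_verts[OF gC e(1)]
          graph_edge_subset_verts[OF gC e(2)]] by simp
  qed
  then show ?thesis unfolding graph_image_def by (simp add: card_image)
qed

lemma isomorphic_graph_image: "isomorphic C (graph_image f C)"
  unfolding isomorphic_def
proof (intro exI conjI)
  show "bij_betw f (verts C) (verts (graph_image f C))"
    using inj unfolding graph_image_def by (simp add: bij_betw_def)
  show "\<forall>u\<in>verts C. \<forall>v\<in>verts C. adj C u v \<longleftrightarrow> adj (graph_image f C) (f u) (f v)"
    using adj_graph_image by blast
qed

lemma min_degree_graph_image:
  assumes "min_degree_ge C k"
  shows "min_degree_ge (graph_image f C) k"
  unfolding min_degree_ge_def
proof
  fix v assume "v \<in> verts (graph_image f C)"
  then obtain x where x: "x \<in> verts C" "v = f x" unfolding graph_image_def by auto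
  have "degree (graph_image f C) v = card (f ` neighbours C x)"
    unfolding degree_def using neighbours_graph_image[OF x(1)] x(2) by simp
  also have "\<dots> = card (neighbours C x)"
    using card_image[OF inj_on_subset[OF inj neighbours_subset_verts[OF gC]]] .
  finally show "k \<le> degree (graph_image f C) v" using min_degree_geD[OF assms x(1)] by simp
qed

end

lemma inj_on_branch_representatives:
  assumes B: "minor_model G C B" and rep: "\<And>x. x \<in> verts C \<Longrightarrow> f x \<in> B x"
  shows "inj_on f (verts C)"
  by (rule inj_onI) (use minor_model_branch_unique[OF B] rep in metis)

lemma minor_model_graph_image:
  assumes gC: "graph C" and B: "minor_model G C B" and rep: "\<And>x. x \<in> verts C \<Longrightarrow> f x \<in> B x"
  shows "minor_model G (graph_image f C) (B \<circ> inv_into (verts C) f)"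
proof -
  have inj: "inj_on f (verts C)" by (rule inj_on_branch_representatives[OF B rep])
  have B': "(B \<circ> inv_into (verts C) f) (f x) = B x" if "x \<in> verts C" for x
    using inv_into_f_f[OF inj that] by simp
  show ?thesis
  proof (rule minor_modelI)
    fix w assume "w \<in> verts (graph_image f C)"
    then obtain x where x: "x \<in> verts C" "w = f x" unfolding graph_image_def by auto
    show "w \<in> (B \<circ> inv_into (verts C) f) w" using x B' rep by simp
    show "(B \<circ> inv_into (verts C) f) w \<subseteq> verts G" using x B' minor_modelD(2)[OF B] by simp
    show "connected_on G ((B \<circ> inv_into (verts C) f) w)" using x B' minor_modelD(3)[OF B] by simp
  next
    fix w z assume "w \<in> verts (graph_image f C)" "z \<in> verts (graph_image f C)" "w \<noteq> z"
    then obtain x y where "x \<in> verts C" "w = f x" "y \<in> verts C" "z = f y" "x \<noteq> y"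
      unfolding graph_image_def by auto
    then show "(B \<circ> inv_into (verts C) f) w \<inter> (B \<circ> inv_into (verts C) f) z = {}"
      using B' minor_modelD(4)[OF B] by simp
  next
    fix w z assume "{w, z} \<in> edges (graph_image f C)"
    then have wz: "adj (graph_image f C) w z" unfolding adj_def .
    then obtain x y where xy: "x \<in> verts C" "w = f x" "y \<in> verts C" "z = f y"
      using graph_adjD[OF graph_graph_image[OF gC inj] wz] unfolding graph_image_def by auto
    then have "{x, y} \<in> edges C" using adj_graph_image[OF gC inj xy(1,3)] wz unfolding adj_def by simp
    then show "\<exists>a\<in>(B \<circ> inv_into (verts C) f) w. \<exists>b\<in>(B \<circ> inv_into (verts C) f) z. adj G a b"
      using minor_modelD(5)[OF B] xy B' by simp
  qed
qed

lemma disjoint_paths_property_mono: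
  "disjoint_paths_property H C v \<Longrightarrow> subgraph H G \<Longrightarrow> disjoint_paths_property G C v"
  unfolding disjoint_paths_property_def subgraph_def using is_path_mono by metis

lemma disjoint_paths_from_fan:
  assumes gC: "graph C" and B: "minor_model G C B" and x: "x \<in> verts C"
    and rep: "\<And>y. y \<in> verts C \<Longrightarrow> f y \<in> B y"
    and fan: "fan G (B x) (f x) (neighbours C x) (adj_branch G B) \<pi>"
  shows "disjoint_paths_property G (graph_image f C) (f x)"
proof -
  have inj: "inj_on f (verts C)" by (rule inj_on_branch_representatives[OF B rep])
  have N: "y \<in> verts C" "y \<noteq> x" if "y \<in> neighbours C x" for y
    using that neighbours_subset_verts[OF gC] self_notin_neighbours[OF gC] by blast+
  have \<pi>: "is_path G (\<pi> y)" "hd (\<pi> y) = f x" "set (\<pi> y) \<subseteq> B x" "adj_branch G B (last (\<pi> y)) y"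
    if "y \<in> neighbours C x" for y
    using fan that unfolding fan_def by auto
  have "\<exists>r. is_path G r \<and> adj G (last (\<pi> y)) (hd r) \<and> last r = f y \<and> set r \<subseteq> B y"
    if y: "y \<in> neighbours C x" for y
  proof -
    obtain t where t: "t \<in> B y" "adj G (last (\<pi> y)) t" using \<pi>(4)[OF y] unfolding adj_branch_def by blast
    have "reach G (B y) t (f y)"
      using connected_onD[OF minor_modelD(3)[OF B N(1)[OF y]] t(1) rep[OF N(1)[OF y]]] .
    then show ?thesis using reach_imp_path[OF _ minor_modelD(2)[OF B N(1)[OF y]]] t(2) by metis
  qed
  then obtain \<rho> where \<rho>: "\<And>y. y \<in> neighbours C x \<Longrightarrow>
      is_path G (\<rho> y) \<and> adj G (last (\<pi> y)) (hd (\<rho> y)) \<and> last (\<rho> y) = f y \<and> set (\<rho> y) \<subseteq> B y"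
    by metis
  have disj_x: "B x \<inter> B y = {}" if "y \<in> neighbours C x" for y
    using minor_modelD(4)[OF B x N(1)[OF that]] N(2)[OF that] by auto
  have disj: "B y \<inter> B y' = {}" if "y \<in> neighbours C x" "y' \<in> neighbours C x" "y \<noteq> y'" for y y'
    using minor_modelD(4)[OF B N(1)[OF that(1)] N(1)[OF that(2)] that(3)] .
  define \<gamma> where "\<gamma> u = \<pi> (inv_into (verts C) f u) @ \<rho> (inv_into (verts C) f u)" for u
  have \<gamma>: "\<gamma> (f y) = \<pi> y @ \<rho> y" if "y \<in> neighbours C x" for y
    unfolding \<gamma>_def using inv_into_f_f[OF inj N(1)[OF that]] by simp
  show ?thesis
    unfolding disjoint_paths_property_def neighbours_graph_image[OF gC inj x]
  proof (intro exI[of _ \<gamma>] conjI ballI impI)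
    fix u assume "u \<in> f ` neighbours C x"
    then obtain y where y: "y \<in> neighbours C x" "u = f y" by blast
    have "set (\<pi> y) \<inter> set (\<rho> y) = {}" using \<pi>(3)[OF y(1)] \<rho>[OF y(1)] disj_x[OF y(1)] by blast
    then have "is_path G (\<pi> y @ \<rho> y)"
      using is_path_append[of G "\<pi> y" "\<rho> y"] \<pi>[OF y(1)] \<rho>[OF y(1)] by blast
    then show "is_path G (\<gamma> u)" "hd (\<gamma> u) = f x" "last (\<gamma> u) = u"
      using \<gamma>[OF y(1)] \<pi>[OF y(1)] \<rho>[OF y(1)] is_path_nonempty[of G "\<pi> y"]
        is_path_nonempty[of G "\<rho> y"] y(2) by auto
  next
    fix u u' assume "u \<in> f ` neighbours C x" "u' \<in> f ` neighbours C x" "u \<noteq> u'"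
    then obtain y y' where y: "y \<in> neighbours C x" "u = f y" "y' \<in> neighbours C x" "u' = f y'" "y \<noteq> y'"
      by blast
    have "set (\<pi> y) \<inter> set (\<pi> y') = {f x}" using fan y(1,3,5) unfolding fan_def by blast
    then show "set (\<gamma> u) \<inter> set (\<gamma> u') = {f x}"
      using \<gamma> y \<pi>(3)[OF y(1)] \<pi>(3)[OF y(3)] \<rho>[OF y(1)] \<rho>[OF y(3)] disj[OF y(1,3,5)]
        disj_x[OF y(1)] disj_x[OF y(3)]
      by auto
  qed
qed

lemma minor_3_core_graph_image:
  assumes core: "minor_3_core G C" and gC: "graph C" and inj: "inj_on f (verts C)"
    and minor: "minor (graph_image f C) G"
  shows "minor_3_core G (graph_image f C)"
  using assms min_degree_graph_image[OF gC inj] card_edges_graph_image[OF gC inj]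
  unfolding minor_3_core_def by simp

theorem lemma18:
  fixes G C :: "'a graph"
  assumes "graph G" and "minor_3_core G C"
  shows "\<exists>C'. minor_3_core G C' \<and> isomorphic C C' \<and>
           (\<forall>v\<in>verts C'. disjoint_paths_property G C' v)"
proof -
  have C: "minor C G" "min_degree_ge C 3"
    and maximal: "\<And>H. minor H G \<Longrightarrow> min_degree_ge H 3 \<Longrightarrow> card (edges H) \<le> card (edges C)"
    using assms(2) unfolding minor_3_core_def by auto
  have gC: "graph C" using minor_graphD[OF C(1)] by simp
  obtain G0 where sub: "subgraph G0 G" and "minor C G0"
    and minimal: "\<And>E. E \<subset> edges G0 \<Longrightarrow> \<not> minor C (verts G0, E)"
    using exists_edge_minimal_host[OF assms(1) C(1)] by metis
  have gG0: "graph G0" using sub unfolding subgraph_def by simp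
  have lift: "minor H G" if "minor H G0" for H
    using minor_trans[OF that subgraph_imp_minor[OF assms(1) sub]] .
  obtain B where B: "minor_model G0 C B" using minor_imp_minor_model[OF \<open>minor C G0\<close>] by blast
  have "\<forall>x\<in>verts C. \<exists>c. c \<in> B x \<and> (\<exists>\<pi>. fan G0 (B x) c (neighbours C x) (adj_branch G0 B) \<pi>)"
    using edge_minimal_host_branch_fan[OF gG0 gC B _ C(2) maximal[OF lift] minimal] by blast
  then obtain f \<pi> where f: "\<And>x. x \<in> verts C \<Longrightarrow> f x \<in> B x"
    and \<pi>: "\<And>x. x \<in> verts C \<Longrightarrow> fan G0 (B x) (f x) (neighbours C x) (adj_branch G0 B) (\<pi> x)"
    by metis
  have inj: "inj_on f (verts C)" by (rule inj_on_branch_representatives[OF B f])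
  have "minor (graph_image f C) G0"
    by (rule minor_model_imp_minor[OF gG0 graph_graph_image[OF gC inj] minor_model_graph_image[OF gC B f]])
  then have "minor_3_core G (graph_image f C)" by (rule minor_3_core_graph_image[OF assms(2) gC inj lift])
  moreover have "disjoint_paths_property G (graph_image f C) (f x)" if "x \<in> verts C" for x
    using disjoint_paths_property_mono[OF disjoint_paths_from_fan[OF gC B that f \<pi>[OF that]] sub] .
  ultimately show ?thesis using isomorphic_graph_image[OF gC inj] unfolding graph_image_def by auto
qed

end
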